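(* Every free pro-$p$ group is strongly commutator-resistant.
   Context: $p$ is a prime; subgroups are closed. $\Phi(H)$ is the Frattini subgroup and $[H,H]$ the closed commutator subgroup. A triple $(G,K,H)$ with $H\le K\le G$ is hierarchical if $x\in G$, $x^p\in H$ imply $x\in K$. A pro-$p$ group $G$ is strongly commutator-resistant if $(H,\Phi(H),[H,H])$ is hierarchical for every subgroup $H$ of $G$. *)

theory Defs
  imports "HOL-Analysis.Analysis" "HOL-Algebra.Generated_Groups" "HOL-Algebra.Coset"
begin

definition topological_group :: "('a, 'b) monoid_scheme \<Rightarrow> 'a topology \<Rightarrow> bool" where
  "topological_group G T \<longleftrightarrow> group G \<and> topspace T = carrier G \<and>
     continuous_map (prod_topology T T) T (\<lambda>(x, y). x \<otimes>\<^bsub>G\<^esub> y) \<and>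
     continuous_map T T (\<lambda>x. inv\<^bsub>G\<^esub> x)"

definition profinite_group :: "('a, 'b) monoid_scheme \<Rightarrow> 'a topology \<Rightarrow> bool" where
  "profinite_group G T \<longleftrightarrow> topological_group G T \<and> compact_space T \<and> Hausdorff_space T \<and>
     (\<forall>W. openin T W \<and> \<one>\<^bsub>G\<^esub> \<in> W \<longrightarrow> (\<exists>N. N \<lhd> G \<and> openin T N \<and> N \<subseteq> W))"

definition pro_p_group :: "nat \<Rightarrow> ('a, 'b) monoid_scheme \<Rightarrow> 'a topology \<Rightarrow> bool" where
  "pro_p_group p G T \<longleftrightarrow> profinite_group G T \<and>
     (\<forall>N. N \<lhd> G \<and> openin T N \<longrightarrow> (\<exists>k. card (rcosets\<^bsub>G\<^esub> N) = p ^ k))"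

text \<open>Finite p-groups (as targets of the universal property; every finite group is
  isomorphic to one with carrier in nat).\<close>
definition finite_p_group :: "nat \<Rightarrow> nat monoid \<Rightarrow> bool" where
  "finite_p_group p K \<longleftrightarrow> group K \<and> finite (carrier K) \<and> (\<exists>k. card (carrier K) = p ^ k)"

text \<open>G is a free pro-p group on the set S with basis map \<iota> (converging to 1),
  in the sense of Ribes--Zalesskii: \<iota> converges to 1, \<iota>(S) topologically generates G,
  and every map from S to a finite p-group converging to 1 (i.e. almost everywhere 1)
  extends to a continuous homomorphism.\<close>
definition free_pro_p_on :: "nat \<Rightarrow> ('a, 'b) monoid_scheme \<Rightarrow> 'a topology \<Rightarrow> 'x set \<Rightarrow> ('x \<Rightarrow> 'a) \<Rightarrow> bool" where
  "free_pro_p_on p G T S \<iota> \<longleftrightarrow> pro_p_group p G T \<and> \<iota> ` S \<subseteq> carrier G \<and>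
     (\<forall>W. openin T W \<and> \<one>\<^bsub>G\<^esub> \<in> W \<longrightarrow> finite {x \<in> S. \<iota> x \<notin> W}) \<and>
     T closure_of (generate G (\<iota> ` S)) = carrier G \<and>
     (\<forall>(K :: nat monoid) f. finite_p_group p K \<and> f ` S \<subseteq> carrier K \<and>
        finite {x \<in> S. f x \<noteq> \<one>\<^bsub>K\<^esub>} \<longrightarrow>
        (\<exists>\<phi> \<in> hom G K. (\<forall>y. openin T {g \<in> carrier G. \<phi> g = y}) \<and> (\<forall>x \<in> S. \<phi> (\<iota> x) = f x)))"

definition free_pro_p_group :: "nat \<Rightarrow> ('a, 'b) monoid_scheme \<Rightarrow> 'a topology \<Rightarrow> bool" where
  "free_pro_p_group p G T \<longleftrightarrow> (\<exists>(S :: 'a set) \<iota>. free_pro_p_on p G T S \<iota>)"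

definition closed_subgroup :: "('a, 'b) monoid_scheme \<Rightarrow> 'a topology \<Rightarrow> 'a set \<Rightarrow> bool" where
  "closed_subgroup G T H \<longleftrightarrow> subgroup H G \<and> closedin T H"

text \<open>Frattini subgroup of a closed subgroup H: intersection of its maximal open
  subgroups (open in the subspace topology); equals H if there are none.\<close>
definition maximal_open_subgroup :: "('a, 'b) monoid_scheme \<Rightarrow> 'a topology \<Rightarrow> 'a set \<Rightarrow> 'a set \<Rightarrow> bool" where
  "maximal_open_subgroup G T H M \<longleftrightarrow> subgroup M G \<and> M \<subset> H \<and> openin (subtopology T H) M \<and>
     (\<forall>L. subgroup L G \<and> M \<subseteq> L \<and> L \<subseteq> H \<longrightarrow> L = M \<or> L = H)"

definition frattini :: "('a, 'b) monoid_scheme \<Rightarrow> 'a topology \<Rightarrow> 'a set \<Rightarrow> 'a set" where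
  "frattini G T H = {x \<in> H. \<forall>M. maximal_open_subgroup G T H M \<longrightarrow> x \<in> M}"

definition closed_commutator :: "('a, 'b) monoid_scheme \<Rightarrow> 'a topology \<Rightarrow> 'a set \<Rightarrow> 'a set" where
  "closed_commutator G T H = T closure_of (derived G H)"

definition hierarchical :: "nat \<Rightarrow> ('a, 'b) monoid_scheme \<Rightarrow> 'a set \<Rightarrow> 'a set \<Rightarrow> 'a set \<Rightarrow> bool" where
  "hierarchical p G A B C \<longleftrightarrow> (\<forall>x \<in> A. x [^]\<^bsub>G\<^esub> p \<in> C \<longrightarrow> x \<in> B)"

definition strongly_commutator_resistant :: "nat \<Rightarrow> ('a, 'b) monoid_scheme \<Rightarrow> 'a topology \<Rightarrow> bool" where
  "strongly_commutator_resistant p G T \<longleftrightarrow>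
     (\<forall>H. closed_subgroup G T H \<longrightarrow>
        hierarchical p G H (frattini G T H) (closed_commutator G T H))"

end

theory Submission
  imports Defs "HOL-Algebra.Group_Action" "HOL-Algebra.Multiplicative_Group"
    "HOL-Algebra.Elementary_Groups"
begin

(* Let M be a maximal open subgroup of the closed subgroup H and x in H with x^p in the closure
   of [H,H]; suppose x is not in M. Choose an open normal N with H \<inter> N \<subseteq> M. In the finite
   p-group HN/N the image of M is maximal, hence normal with cyclic quotient, which yields a
   character gamma: HN/N -> Z/p with gamma(x) \<noteq> 0. Inducing gamma to G/N gives a homomorphism
   from G to the wreath product Z/p wr G/N (with respect to the cosets of HN/N); as G is free
   pro-p, it lifts along the reduction Z/p^2 wr G/N -> Z/p wr G/N. On H the coordinate of the
   lift at the trivial coset is a continuous character psi: H -> Z/p^2 reducing to gamma. It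
   kills the closure of [H,H], so p psi(x) = psi(x^p) = 0 and gamma(x) = psi(x) mod p = 0. *)

section \<open>Maximal subgroups of finite p-groups\<close>

lemma (in group) subgroup_card_prime_power:
  assumes "card (carrier G) = p ^ n" and "prime p" and "subgroup K G"
  shows "\<exists>j. card K = p ^ j" and "\<exists>j. card (rcosets K) = p ^ j"
proof -
  have "card (rcosets K) * card K = p ^ n"
    using lagrange[OF assms(3)] assms(1) unfolding order_def by simp
  then have "card K dvd p ^ n" and "card (rcosets K) dvd p ^ n"
    by (metis dvd_triv_right, metis dvd_triv_left)
  then show "\<exists>j. card K = p ^ j" and "\<exists>j. card (rcosets K) = p ^ j"
    using divides_primepow_nat[OF assms(2)] by blast+
qed

lemma (in group_action) card_orbit_prime_power:
  assumes "card (carrier G) = p ^ n" and "prime p" and "x \<in> E"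
  shows "\<exists>e. card (orbit G \<phi> x) = p ^ e"
proof -
  have "card (orbit G \<phi> x) dvd p ^ n"
    using orbit_stabilizer_theorem[OF assms(3)] assms(1) unfolding order_def
    by (metis dvd_triv_left)
  then show ?thesis
    using divides_primepow_nat[OF assms(2)] by blast
qed

lemma (in group_action) orbit_eq_singleton_iff:
  assumes "x \<in> E"
  shows "orbit G \<phi> x = {x} \<longleftrightarrow> (\<forall>g \<in> carrier G. \<phi> g x = x)"
proof -
  interpret group G
    by (rule group_hom.axioms(1)[OF group_hom])
  show ?thesis
    unfolding orbit_def by auto (metis one_closed)
qed

lemma (in group_action) card_fixed_points_mod_prime:
  assumes "finite E" and "card (carrier G) = p ^ n" and "prime p"
  shows "card {x \<in> E. \<forall>g \<in> carrier G. \<phi> g x = x} mod p = card E mod p"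
proof -
  let ?F = "{x \<in> E. \<forall>g \<in> carrier G. \<phi> g x = x}"
  let ?Orbs = "orbits G E \<phi>"
  let ?Singles = "{B \<in> ?Orbs. card B = 1}"
  have finite_orbits: "finite ?Orbs"
    using assms(1) unfolding orbits_def by simp
  have singleton_orbits: "?Singles = (\<lambda>x. {x}) ` ?F"
  proof (intro equalityI subsetI)
    fix B assume "B \<in> ?Singles"
    then obtain x where x: "x \<in> E" "B = orbit G \<phi> x" "card B = 1"
      unfolding orbits_def by blast
    then have "B = {x}"
      using orbit_refl[OF x(1)] by (metis card_1_singletonE singletonD)
    then show "B \<in> (\<lambda>x. {x}) ` ?F"
      using x orbit_eq_singleton_iff by blast
  next
    fix B assume "B \<in> (\<lambda>x. {x}) ` ?F"
    then show "B \<in> ?Singles"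
      using orbit_eq_singleton_iff unfolding orbits_def by fastforce
  qed
  have "card E = (\<Sum>B \<in> ?Orbs. card B)"
    using partition.disjoint_sum[OF orbit_partition assms(1), of "\<lambda>_. 1::nat"] by simp
  also have "\<dots> = (\<Sum>B \<in> ?Singles. card B) + (\<Sum>B \<in> ?Orbs - ?Singles. card B)"
    using sum.subset_diff[OF Collect_subset finite_orbits, of card "\<lambda>B. card B = 1"]
    by (simp add: add.commute)
  also have "(\<Sum>B \<in> ?Singles. card B) = card ?F"
    unfolding singleton_orbits by (simp add: sum.reindex inj_on_def)
  finally have "card E = card ?F + (\<Sum>B \<in> ?Orbs - ?Singles. card B)" .
  moreover have "p dvd (\<Sum>B \<in> ?Orbs - ?Singles. card B)"
  proof (rule dvd_sum)
    fix B assume "B \<in> ?Orbs - ?Singles"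
    then obtain e where "card B = p ^ e" "e \<noteq> 0"
      using card_orbit_prime_power[OF assms(2,3)] unfolding orbits_def by fastforce
    then show "p dvd card B"
      by simp
  qed
  ultimately show ?thesis
    by (auto elim!: dvdE)
qed

lemma (in group) rcosets_r_coset_closed:
  assumes "subgroup U G" and "c \<in> rcosets U" and "g \<in> carrier G"
  shows "c #> g \<in> rcosets U"
proof -
  obtain a where a: "a \<in> carrier G" "c = U #> a"
    using assms(2) unfolding RCOSETS_def by blast
  then have "c #> g = U #> (a \<otimes> g)"
    using assms(1,3) coset_mult_assoc subgroup.subset by blast
  then show ?thesis
    using a assms(3) rcosetsI[OF subgroup.subset[OF assms(1)]] by simp
qed

lemma (in group) right_translation_action:
  assumes "subgroup M G"
  shows "group_action G (rcosets M) (\<lambda>g. \<lambda>c \<in> rcosets M. c #> inv g)"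
proof -
  let ?X = "rcosets M"
  let ?\<phi> = "\<lambda>g. \<lambda>c \<in> ?X. c #> inv g"
  have assoc: "(c #> g) #> h = c #> (g \<otimes> h)"
    if "c \<in> ?X" "g \<in> carrier G" "h \<in> carrier G" for c g h
    using that coset_mult_assoc subgroup.rcosets_carrier[OF assms] by blast
  have closed: "c #> g \<in> ?X" if "c \<in> ?X" "g \<in> carrier G" for c g
    using rcosets_r_coset_closed[OF assms] that .
  have bij: "?\<phi> g \<in> Bij ?X" if g: "g \<in> carrier G" for g
  proof -
    have "bij_betw (\<lambda>c. c #> inv g) ?X ?X"
    proof (rule bij_betw_byWitness[where f' = "\<lambda>c. c #> g"])
      show "\<forall>c\<in>?X. c #> inv g #> g = c" and "\<forall>c\<in>?X. c #> g #> inv g = c"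
        using g by (simp_all add: assoc subgroup.rcosets_carrier[OF assms])
      show "(\<lambda>c. c #> inv g) ` ?X \<subseteq> ?X" and "(\<lambda>c. c #> g) ` ?X \<subseteq> ?X"
        using g closed by auto
    qed
    then show ?thesis
      unfolding Bij_def by simp
  qed
  have "?\<phi> \<in> hom G (BijGroup ?X)"
  proof (rule homI)
    show "?\<phi> g \<in> carrier (BijGroup ?X)" if "g \<in> carrier G" for g
      using bij[OF that] by (simp add: BijGroup_def)
    show "?\<phi> (g \<otimes> h) = ?\<phi> g \<otimes>\<^bsub>BijGroup ?X\<^esub> ?\<phi> h"
      if g: "g \<in> carrier G" and h: "h \<in> carrier G" for g h
    proof -
      have "?\<phi> (g \<otimes> h) = compose ?X (?\<phi> g) (?\<phi> h)"
        unfolding compose_def using g h by (intro restrict_ext) (simp add: closed assoc inv_mult_group)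
      then show ?thesis
        using bij g h by (simp add: BijGroup_def)
    qed
  qed
  then show ?thesis
    unfolding group_action_def group_hom_def group_hom_axioms_def
    using group_BijGroup is_group by blast
qed

lemma (in group) subgroup_subset_normalizer:
  assumes "subgroup M G"
  shows "M \<subseteq> normalizer G M"
proof
  fix m assume m: "m \<in> M"
  have "m \<in> carrier G" and "inv m \<in> M"
    using subgroup.mem_carrier[OF assms m] subgroup.m_inv_closed[OF assms m] by auto
  then have "m <# M #> inv m = M"
    using m assms coset_join2 coset_join3 by auto
  then show "m \<in> normalizer G M"
    using \<open>m \<in> carrier G\<close> subgroup.subset[OF assms]
    unfolding normalizer_def stabilizer_def by auto
qed

lemma (in group) mem_normalizer_of_finite_subgroup:
  assumes "subgroup M G" and "finite M" and a: "a \<in> carrier G"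
    and conj: "\<And>m. m \<in> M \<Longrightarrow> a \<otimes> m \<otimes> inv a \<in> M"
  shows "a \<in> normalizer G M"
proof -
  have Msub: "M \<subseteq> carrier G"
    using assms(1) subgroup.subset by blast
  have conjugate: "a <# M #> inv a = (\<lambda>m. a \<otimes> m \<otimes> inv a) ` M"
    unfolding l_coset_def r_coset_def by auto
  have "inj_on (\<lambda>m. a \<otimes> m \<otimes> inv a) M"
    using a Msub by (intro inj_onI) (auto dest: conjugation_is_inj)
  then have "card ((\<lambda>m. a \<otimes> m \<otimes> inv a) ` M) = card M"
    by (rule card_image)
  moreover have "(\<lambda>m. a \<otimes> m \<otimes> inv a) ` M \<subseteq> M"
    using conj by blast
  ultimately have "a <# M #> inv a = M"
    unfolding conjugate using card_subset_eq[OF assms(2)] by blast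
  then show ?thesis
    using a Msub unfolding normalizer_def stabilizer_def by auto
qed

lemma (in group) normalizer_eq_carrier_imp_normal:
  assumes "subgroup M G" and "normalizer G M = carrier G"
  shows "M \<lhd> G"
proof -
  have "g \<otimes> h \<otimes> inv g \<in> M" if g: "g \<in> carrier G" and h: "h \<in> M" for g h
  proof -
    have "g <# M #> inv g = M"
      using g assms subgroup.subset unfolding normalizer_def stabilizer_def by force
    moreover have "g \<otimes> h \<otimes> inv g \<in> g <# M #> inv g"
      using h unfolding l_coset_def r_coset_def by auto
    ultimately show ?thesis
      by simp
  qed
  then show ?thesis
    using assms(1) normal_inv_iff by blast
qed

lemma (in group) prime_dvd_index_of_proper_subgroup:
  assumes order: "card (carrier G) = p ^ n" and p: "prime p"
    and sub: "subgroup M G" and proper: "M \<noteq> carrier G"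
  shows "p dvd card (rcosets M)"
proof -
  obtain e where e: "card (rcosets M) = p ^ e"
    using subgroup_card_prime_power(2)[OF order p sub] by blast
  have "e \<noteq> 0"
  proof
    assume "e = 0"
    then have "rcosets M = {M}"
      using e subgroup.subgroup_in_rcosets[OF sub is_group]
      by (metis card_1_singletonE power_0 singletonD)
    then show False
      using rcosets_part_G[OF sub] proper by simp
  qed
  then show ?thesis
    using e by simp
qed

lemma (in group) fixed_coset_of_proper_subgroup_of_p_group:
  assumes order: "card (carrier G) = p ^ n" and p: "prime p"
    and sub: "subgroup M G" and proper: "M \<noteq> carrier G"
  shows "\<exists>a \<in> carrier G. a \<notin> M \<and> (\<forall>g \<in> M. M #> a #> g = M #> a)"
proof -
  have "card (carrier G) > 0"
    using order p prime_gt_0_nat by simp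
  then have fin: "finite (carrier G)"
    by (rule card_ge_0_finite)
  have Msub: "M \<subseteq> carrier G"
    using sub subgroup.subset by blast
  let ?X = "rcosets M"
  let ?\<phi> = "\<lambda>g. \<lambda>c \<in> ?X. c #> inv g"
  interpret A: group_action "G\<lparr>carrier := M\<rparr>" ?X ?\<phi>
    using group_action.induced_action[OF right_translation_action[OF sub] sub] .
  have finX: "finite ?X"
    using fin rcosets_subset_PowG[OF sub] by (meson finite_Pow_iff finite_subset)
  obtain m where m: "card M = p ^ m"
    using subgroup_card_prime_power(1)[OF order p sub] by blast
  let ?F = "{c \<in> ?X. \<forall>g \<in> M. ?\<phi> g c = c}"
  have "card ?F mod p = card ?X mod p"
    using A.card_fixed_points_mod_prime[OF finX _ p] m by simp
  then have F_card: "card ?F mod p = 0"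
    using prime_dvd_index_of_proper_subgroup[OF order p sub proper] by simp
  have "M \<in> ?F"
  proof -
    have "M #> inv g = M" if "g \<in> M" for g
      using coset_join2[OF _ sub] subgroup.m_inv_closed[OF sub that] Msub by blast
    then show ?thesis
      using subgroup.subgroup_in_rcosets[OF sub is_group] by simp
  qed
  moreover have "?F \<noteq> {M}"
  proof
    assume "?F = {M}"
    then have "card {M} mod p = 0"
      using F_card by simp
    then show False
      using prime_gt_1_nat[OF p] by simp
  qed
  ultimately obtain c where c: "c \<in> ?F" "c \<noteq> M"
    by blast
  then obtain a where a: "a \<in> carrier G" "c = M #> a"
    unfolding RCOSETS_def by blast
  have "a \<notin> M"
    using a c(2) coset_join2[OF a(1) sub] by blast
  moreover have "M #> a #> g = M #> a" if g: "g \<in> M" for g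
    using c(1) a subgroup.m_inv_closed[OF sub g] subgroup.mem_carrier[OF sub g] by auto
  ultimately show ?thesis
    using a(1) by blast
qed

lemma (in group) subgroup_psubset_normalizer_of_p_group:
  assumes order: "card (carrier G) = p ^ n" and p: "prime p"
    and sub: "subgroup M G" and proper: "M \<noteq> carrier G"
  shows "M \<subset> normalizer G M"
proof -
  obtain a where a: "a \<in> carrier G" "a \<notin> M" and fixed: "\<And>g. g \<in> M \<Longrightarrow> M #> a #> g = M #> a"
    using fixed_coset_of_proper_subgroup_of_p_group[OF order p sub proper] by blast
  have Msub: "M \<subseteq> carrier G"
    using sub subgroup.subset by blast
  have "a \<otimes> g \<otimes> inv a \<in> M" if g: "g \<in> M" for g
  proof -
    have gc: "g \<in> carrier G"
      using g Msub by blast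
    have "M #> (a \<otimes> g) = M #> a"
      using fixed[OF g] a gc Msub coset_mult_assoc by simp
    then have "a \<otimes> g \<in> M #> a"
      using rcos_self[of "a \<otimes> g" M] a gc sub by simp
    then show ?thesis
      using subgroup.rcos_module_imp[OF sub is_group a(1)] by blast
  qed
  moreover have "finite M"
    using order p prime_gt_0_nat card_ge_0_finite finite_subset[OF Msub] by fastforce
  ultimately have "a \<in> normalizer G M"
    using mem_normalizer_of_finite_subgroup[OF sub _ a(1)] by blast
  then show ?thesis
    using subgroup_subset_normalizer[OF sub] a(2) by blast
qed

definition maximal_subgroup :: "('a, 'b) monoid_scheme \<Rightarrow> 'a set \<Rightarrow> bool" where
  "maximal_subgroup G M \<longleftrightarrow> subgroup M G \<and> M \<noteq> carrier G \<and>
     (\<forall>L. subgroup L G \<longrightarrow> M \<subseteq> L \<longrightarrow> L = M \<or> L = carrier G)"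

lemma (in group) maximal_subgroup_of_p_group_normal:
  assumes order: "card (carrier G) = p ^ n" and p: "prime p" and max: "maximal_subgroup G M"
  shows "M \<lhd> G"
proof -
  have sub: "subgroup M G" and proper: "M \<noteq> carrier G"
    and maximal: "\<And>L. subgroup L G \<Longrightarrow> M \<subseteq> L \<Longrightarrow> L = M \<or> L = carrier G"
    using max unfolding maximal_subgroup_def by blast+
  have "M \<subseteq> carrier G"
    using sub subgroup.subset by blast
  then have "normalizer G M = carrier G"
    using maximal[OF normalizer_imp_subgroup]
      subgroup_psubset_normalizer_of_p_group[OF order p sub proper]
    by blast
  then show ?thesis
    by (rule normalizer_eq_carrier_imp_normal[OF sub])
qed

lemma (in group) cyclic_group_character:
  assumes x: "x \<in> carrier G" and gen: "carrier G = range (\<lambda>n::int. x [^] n)"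
    and d: "d dvd ord x"
  shows "\<exists>\<gamma> \<in> hom G (integer_mod_group d). \<gamma> x = 1 mod int d"
proof -
  define \<gamma> where "\<gamma> g = (SOME n::int. g = x [^] n) mod int d" for g
  have \<gamma>_pow: "\<gamma> (x [^] n) = n mod int d" for n :: int
  proof -
    have "x [^] n = x [^] (SOME m::int. x [^] n = x [^] m)"
      by (rule someI_ex) blast
    then have "int (ord x) dvd (SOME m::int. x [^] n = x [^] m) - n"
      using int_pow_eq[OF x] by blast
    then have "int d dvd (SOME m::int. x [^] n = x [^] m) - n"
      using d by (meson dvd_trans int_dvd_int_iff)
    then show ?thesis
      unfolding \<gamma>_def by (simp add: mod_eq_dvd_iff)
  qed
  have "\<gamma> \<in> hom G (integer_mod_group d)"
  proof (rule homI)
    fix g assume "g \<in> carrier G"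
    then obtain n :: int where "g = x [^] n"
      using gen by blast
    then show "\<gamma> g \<in> carrier (integer_mod_group d)"
      by (simp add: \<gamma>_pow carrier_integer_mod_group)
  next
    fix g h assume "g \<in> carrier G" "h \<in> carrier G"
    then obtain n k :: int where "g = x [^] n" "h = x [^] k"
      using gen by blast
    then show "\<gamma> (g \<otimes> h) = \<gamma> g \<otimes>\<^bsub>integer_mod_group d\<^esub> \<gamma> h"
      using x by (simp add: \<gamma>_pow mod_add_eq flip: int_pow_mult)
  qed
  moreover have "\<gamma> x = 1 mod int d"
    using \<gamma>_pow[of 1] x by simp
  ultimately show ?thesis
    by blast
qed

lemma integer_mod_group_reduction_hom:
  assumes "d dvd n"
  shows "(\<lambda>k. k mod int d) \<in> hom (integer_mod_group n) (integer_mod_group d)"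
  using assms by (intro homI)
    (simp_all add: carrier_integer_mod_group mod_mod_cancel mod_add_left_eq mod_add_right_eq)

lemma integer_mod_group_reduction_surj:
  assumes "d dvd n" and "n > 0"
  shows "(\<lambda>k. k mod int d) ` carrier (integer_mod_group n) = carrier (integer_mod_group d)"
proof
  show "(\<lambda>k. k mod int d) ` carrier (integer_mod_group n) \<subseteq> carrier (integer_mod_group d)"
    using hom_carrier[OF integer_mod_group_reduction_hom[OF assms(1)]] .
  have "d \<le> n" and "d > 0"
    using assms by (auto simp: dvd_imp_le intro: Nat.gr0I)
  show "carrier (integer_mod_group d) \<subseteq> (\<lambda>k. k mod int d) ` carrier (integer_mod_group n)"
  proof
    fix k assume "k \<in> carrier (integer_mod_group d)"
    then have "k \<in> carrier (integer_mod_group n)" and "k mod int d = k"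
      using \<open>d \<le> n\<close> \<open>d > 0\<close> by (auto simp: carrier_integer_mod_group)
    then show "k \<in> (\<lambda>k. k mod int d) ` carrier (integer_mod_group n)"
      by (metis image_eqI)
  qed
qed

lemma (in group_hom) subgroup_vimage:
  assumes "subgroup K H"
  shows "subgroup (carrier G \<inter> h -` K) G"
proof (rule G.subgroupI)
  show "carrier G \<inter> h -` K \<noteq> {}"
    using subgroup.one_closed[OF assms] by force
  show "inv a \<in> carrier G \<inter> h -` K" if "a \<in> carrier G \<inter> h -` K" for a
    using that subgroup.m_inv_closed[OF assms] by simp
  show "a \<otimes> b \<in> carrier G \<inter> h -` K"
    if "a \<in> carrier G \<inter> h -` K" "b \<in> carrier G \<inter> h -` K" for a b
    using that subgroup.m_closed[OF assms] by simp
qed blast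

lemma (in group_hom) restrict_subgroup:
  assumes "subgroup K G"
  shows "group_hom (G\<lparr>carrier := K\<rparr>) H h"
proof -
  have "h \<in> hom (G\<lparr>carrier := K\<rparr>) H"
    by (intro homI) (simp_all add: subgroup.mem_carrier[OF assms])
  then show ?thesis
    using G.subgroup_imp_group[OF assms] H.is_group by (simp add: group_hom_def group_hom_axioms_def)
qed

lemma (in group_hom) image_mem_iff_of_kernel_subset:
  assumes "subgroup M G" and "kernel G H h \<subseteq> M" and g: "g \<in> carrier G"
  shows "h g \<in> h ` M \<longleftrightarrow> g \<in> M"
proof
  assume "h g \<in> h ` M"
  then obtain m where m: "m \<in> M" "h g = h m"
    by blast
  have mc: "m \<in> carrier G"
    using subgroup.mem_carrier[OF assms(1) m(1)] .
  have "g \<otimes> inv m \<in> kernel G H h"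
    using g mc m(2) unfolding kernel_def by simp
  then have "g \<otimes> inv m \<in> M"
    using assms(2) by blast
  then have "g \<otimes> inv m \<otimes> m \<in> M"
    using subgroup.m_closed[OF assms(1) _ m(1)] by blast
  then show "g \<in> M"
    using g mc by (simp add: G.m_assoc)
qed blast

lemma (in group_hom) maximal_subgroup_image:
  assumes max: "maximal_subgroup G M" and ker: "kernel G H h \<subseteq> M"
  shows "maximal_subgroup (H\<lparr>carrier := h ` carrier G\<rparr>) (h ` M)"
proof -
  have sub: "subgroup M G" and proper: "M \<noteq> carrier G"
    and maximal: "\<And>L. subgroup L G \<Longrightarrow> M \<subseteq> L \<Longrightarrow> L = M \<or> L = carrier G"
    using max unfolding maximal_subgroup_def by blast+
  have Msub: "M \<subseteq> carrier G"
    using sub subgroup.subset by blast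
  have "subgroup (h ` M) (H\<lparr>carrier := h ` carrier G\<rparr>)"
    using H.subgroup_incl[OF subgroup_img_is_subgroup[OF sub] img_is_subgroup] Msub by blast
  moreover have "h ` M \<noteq> h ` carrier G"
  proof -
    obtain g where "g \<in> carrier G" "g \<notin> M"
      using proper Msub by blast
    then show ?thesis
      using image_mem_iff_of_kernel_subset[OF sub ker] by blast
  qed
  moreover have "L = h ` M \<or> L = h ` carrier G"
    if L: "subgroup L (H\<lparr>carrier := h ` carrier G\<rparr>)" and incl: "h ` M \<subseteq> L" for L
  proof -
    have Limg: "L \<subseteq> h ` carrier G"
      using subgroup.subset[OF L] by simp
    have "subgroup (carrier G \<inter> h -` L) G"
      using subgroup_vimage[OF H.incl_subgroup[OF img_is_subgroup L]] .
    moreover have "M \<subseteq> carrier G \<inter> h -` L"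
      using incl Msub by blast
    moreover have "h ` (carrier G \<inter> h -` L) = L"
      using Limg by blast
    ultimately show ?thesis
      using maximal by metis
  qed
  ultimately show ?thesis
    unfolding maximal_subgroup_def by simp
qed

lemma (in normal) quotient_by_maximal_subgroup_cyclic:
  assumes max: "maximal_subgroup G H" and y: "y \<in> carrier G" "y \<notin> H"
  shows "carrier (G Mod H) = range (\<lambda>k::int. (H #> y) [^]\<^bsub>G Mod H\<^esub> k)"
proof
  interpret R: group "G Mod H"
    by (rule factorgroup_is_group)
  interpret \<pi>: group_hom G "G Mod H" "\<lambda>g. H #> g"
    using r_coset_hom_Mod by (simp add: group_hom_def group_hom_axioms_def is_group R.is_group)
  have yR: "H #> y \<in> carrier (G Mod H)"
    using y(1) by simp
  let ?L = "carrier G \<inter> (\<lambda>g. H #> g) -` range (\<lambda>k::int. (H #> y) [^]\<^bsub>G Mod H\<^esub> k)"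
  have "subgroup ?L G"
    using \<pi>.subgroup_vimage[OF R.subgroup_of_powers[OF yR]] .
  moreover have "H \<subseteq> ?L"
  proof
    fix h assume "h \<in> H"
    then have "H #> h = (H #> y) [^]\<^bsub>G Mod H\<^esub> (0::int)"
      using coset_join2[OF mem_carrier subgroup_axioms] by simp
    then show "h \<in> ?L"
      using mem_carrier[OF \<open>h \<in> H\<close>] by blast
  qed
  moreover have "y \<in> ?L"
    using y(1) R.int_pow_1[OF yR] by (metis IntI rangeI vimageI)
  ultimately have "?L = carrier G"
    using max y(2) unfolding maximal_subgroup_def by blast
  then show "carrier (G Mod H) \<subseteq> range (\<lambda>k::int. (H #> y) [^]\<^bsub>G Mod H\<^esub> k)"
    unfolding carrier_FactGroup by blast
next
  show "range (\<lambda>k::int. (H #> y) [^]\<^bsub>G Mod H\<^esub> k) \<subseteq> carrier (G Mod H)"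
    using group.int_pow_closed[OF factorgroup_is_group, of "H #> y"] y(1)
    by (auto simp: carrier_FactGroup)
qed

lemma (in group) maximal_subgroup_of_p_group_character:
  assumes order: "card (carrier G) = p ^ n" and p: "prime p" and max: "maximal_subgroup G M"
    and y: "y \<in> carrier G" "y \<notin> M"
  shows "\<exists>\<gamma> \<in> hom G (integer_mod_group p). \<gamma> y \<noteq> 0"
proof -
  have sub: "subgroup M G"
    using max unfolding maximal_subgroup_def by blast
  interpret N: normal M G
    using maximal_subgroup_of_p_group_normal[OF order p max] .
  let ?R = "G Mod M"
  let ?y = "M #> y"
  interpret R: group ?R
    by (rule N.factorgroup_is_group)
  have yR: "?y \<in> carrier ?R"
    using y(1) by (simp add: carrier_FactGroup)
  have "p dvd R.ord ?y"
  proof -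
    obtain e where "order ?R = p ^ e"
      using subgroup_card_prime_power(2)[OF order p sub] unfolding order_def FactGroup_def by auto
    then obtain f where f: "R.ord ?y = p ^ f"
      using R.ord_dvd_group_order[OF yR] divides_primepow_nat[OF p] by metis
    have "?y \<noteq> \<one>\<^bsub>?R\<^esub>"
      using y rcos_self[OF y(1) sub] by auto
    then have "f \<noteq> 0"
      using f R.ord_eq_1[OF yR] by auto
    then show ?thesis
      using f by simp
  qed
  then obtain \<gamma> where \<gamma>: "\<gamma> \<in> hom ?R (integer_mod_group p)" "\<gamma> ?y = 1 mod int p"
    using R.cyclic_group_character[OF yR N.quotient_by_maximal_subgroup_cyclic[OF max y]] by blast
  have "\<gamma> \<circ> (\<lambda>g. M #> g) \<in> hom G (integer_mod_group p)"
    using Group.hom_compose[OF N.r_coset_hom_Mod \<gamma>(1)] .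
  moreover have "(\<gamma> \<circ> (\<lambda>g. M #> g)) y \<noteq> 0"
    using \<gamma>(2) prime_gt_1_nat[OF p] by simp
  ultimately show ?thesis
    by blast
qed

section \<open>Permutational wreath products\<close>

definition wreath_product ::
    "('b, 'c) monoid_scheme \<Rightarrow> ('q, 'z) monoid_scheme \<Rightarrow> 'q set \<Rightarrow> (('q set \<Rightarrow> 'b) \<times> 'q) monoid"
  where "wreath_product A Q U =
    \<lparr>carrier = (rcosets\<^bsub>Q\<^esub> U \<rightarrow>\<^sub>E carrier A) \<times> carrier Q,
     mult = (\<lambda>x y. (\<lambda>c \<in> rcosets\<^bsub>Q\<^esub> U. fst x c \<otimes>\<^bsub>A\<^esub> fst y (c #>\<^bsub>Q\<^esub> snd x), snd x \<otimes>\<^bsub>Q\<^esub> snd y)),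
     one = (\<lambda>c \<in> rcosets\<^bsub>Q\<^esub> U. \<one>\<^bsub>A\<^esub>, \<one>\<^bsub>Q\<^esub>)\<rparr>"

lemma wreath_product_simps:
  "carrier (wreath_product A Q U) = (rcosets\<^bsub>Q\<^esub> U \<rightarrow>\<^sub>E carrier A) \<times> carrier Q"
  "x \<otimes>\<^bsub>wreath_product A Q U\<^esub> y =
     (\<lambda>c \<in> rcosets\<^bsub>Q\<^esub> U. fst x c \<otimes>\<^bsub>A\<^esub> fst y (c #>\<^bsub>Q\<^esub> snd x), snd x \<otimes>\<^bsub>Q\<^esub> snd y)"
  "\<one>\<^bsub>wreath_product A Q U\<^esub> = (\<lambda>c \<in> rcosets\<^bsub>Q\<^esub> U. \<one>\<^bsub>A\<^esub>, \<one>\<^bsub>Q\<^esub>)"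
  by (simp_all add: wreath_product_def)

lemma group_wreath_product:
  fixes Q (structure)
  assumes A: "group A" and Q: "group Q" and U: "subgroup U Q"
  shows "group (wreath_product A Q U)"
proof -
  interpret A: group A by (rule A)
  interpret Q: group Q by (rule Q)
  let ?R = "rcosets U"
  let ?W = "wreath_product A Q U"
  have closed: "c #> g \<in> ?R" if "c \<in> ?R" "g \<in> carrier Q" for c g
    using Q.rcosets_r_coset_closed[OF U that] .
  have assoc: "c #> g #> h = c #> (g \<otimes> h)" if "c \<in> ?R" "g \<in> carrier Q" "h \<in> carrier Q" for c g h
    using that Q.coset_mult_assoc subgroup.rcosets_carrier[OF U Q] by blast
  have one: "c #> \<one> = c" if "c \<in> ?R" for c
    using that Q.coset_mult_one subgroup.rcosets_carrier[OF U Q] by blast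
  show ?thesis
  proof (rule groupI)
    fix x y assume "x \<in> carrier ?W" "y \<in> carrier ?W"
    then show "x \<otimes>\<^bsub>?W\<^esub> y \<in> carrier ?W"
      by (auto simp: wreath_product_simps PiE_iff closed)
  next
    show "\<one>\<^bsub>?W\<^esub> \<in> carrier ?W"
      by (auto simp: wreath_product_simps)
  next
    fix x y z assume x: "x \<in> carrier ?W" and y: "y \<in> carrier ?W" and z: "z \<in> carrier ?W"
    then have xs: "snd x \<in> carrier Q" and ys: "snd y \<in> carrier Q" and zs: "snd z \<in> carrier Q"
      and xf: "fst x \<in> ?R \<rightarrow>\<^sub>E carrier A" and yf: "fst y \<in> ?R \<rightarrow>\<^sub>E carrier A"
      and zf: "fst z \<in> ?R \<rightarrow>\<^sub>E carrier A"
      by (auto simp: wreath_product_simps)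
    have "fst x c \<otimes>\<^bsub>A\<^esub> fst y (c #> snd x) \<otimes>\<^bsub>A\<^esub> fst z (c #> (snd x \<otimes> snd y)) =
        fst x c \<otimes>\<^bsub>A\<^esub> (fst y (c #> snd x) \<otimes>\<^bsub>A\<^esub> fst z (c #> snd x #> snd y))"
      if c: "c \<in> ?R" for c
      using c xs ys xf yf zf closed[OF c xs] closed[OF closed[OF c xs] ys]
      by (simp add: assoc A.m_assoc PiE_iff)
    then show "x \<otimes>\<^bsub>?W\<^esub> y \<otimes>\<^bsub>?W\<^esub> z = x \<otimes>\<^bsub>?W\<^esub> (y \<otimes>\<^bsub>?W\<^esub> z)"
      using xs ys zs closed by (auto simp: wreath_product_simps Q.m_assoc intro!: restrict_ext)
  next
    fix x assume "x \<in> carrier ?W"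
    then have xs: "snd x \<in> carrier Q" and xf: "fst x \<in> ?R \<rightarrow>\<^sub>E carrier A"
      by (auto simp: wreath_product_simps)
    have "(\<lambda>c \<in> ?R. (\<lambda>c \<in> ?R. \<one>\<^bsub>A\<^esub>) c \<otimes>\<^bsub>A\<^esub> fst x (c #> \<one>)) = fst x"
      using xf one by (auto simp: PiE_iff extensional_def)
    then show "\<one>\<^bsub>?W\<^esub> \<otimes>\<^bsub>?W\<^esub> x = x"
      using xs by (simp add: wreath_product_simps prod_eq_iff)
  next
    fix x assume "x \<in> carrier ?W"
    then have xs: "snd x \<in> carrier Q" and xf: "fst x \<in> ?R \<rightarrow>\<^sub>E carrier A"
      by (auto simp: wreath_product_simps)
    let ?y = "(\<lambda>c \<in> ?R. inv\<^bsub>A\<^esub> fst x (c #> inv (snd x)), inv (snd x))"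
    have "?y \<in> carrier ?W"
      using xs xf closed by (auto simp: wreath_product_simps PiE_iff)
    moreover have "?y \<otimes>\<^bsub>?W\<^esub> x = \<one>\<^bsub>?W\<^esub>"
      using xs xf closed by (auto simp: wreath_product_simps PiE_iff intro!: restrict_ext)
    ultimately show "\<exists>y \<in> carrier ?W. y \<otimes>\<^bsub>?W\<^esub> x = \<one>\<^bsub>?W\<^esub>"
      by blast
  qed
qed

lemma card_wreath_product:
  fixes Q (structure)
  assumes "group Q" and "subgroup U Q" and "finite (carrier Q)" and "finite (carrier A)"
  shows "card (carrier (wreath_product A Q U)) = card (carrier A) ^ card (rcosets U) * card (carrier Q)"
proof -
  have "finite (rcosets U)"
    using assms(3) group.rcosets_subset_PowG[OF assms(1,2)] by (meson finite_Pow_iff finite_subset)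
  then show ?thesis
    by (simp add: wreath_product_simps card_cartesian_product card_PiE)
qed

lemma wreath_product_base_mult:
  fixes Q (structure)
  assumes "group Q" and "subgroup U Q" and "snd x \<in> U"
  shows "fst (x \<otimes>\<^bsub>wreath_product A Q U\<^esub> y) U = fst x U \<otimes>\<^bsub>A\<^esub> fst y U"
  using group.coset_join2[OF assms(1) subgroup.mem_carrier[OF assms(2,3)] assms(2,3)]
    subgroup.subgroup_in_rcosets[OF assms(2,1)]
  by (simp add: wreath_product_simps)

lemma wreath_product_base_coordinate_hom:
  fixes Q (structure)
  assumes "group Q" and U: "subgroup U Q" and \<Theta>: "\<Theta> \<in> hom K (wreath_product A Q U)"
    and snd_\<Theta>: "\<And>g. g \<in> carrier K \<Longrightarrow> snd (\<Theta> g) \<in> U"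
  shows "(\<lambda>g. fst (\<Theta> g) U) \<in> hom K A"
proof (rule homI)
  have U_coset: "U \<in> rcosets U"
    using subgroup.subgroup_in_rcosets[OF U assms(1)] .
  fix g assume "g \<in> carrier K"
  then have "\<Theta> g \<in> carrier (wreath_product A Q U)"
    by (rule hom_in_carrier[OF \<Theta>])
  then have "fst (\<Theta> g) \<in> rcosets U \<rightarrow>\<^sub>E carrier A"
    by (simp add: wreath_product_simps mem_Times_iff)
  then show "fst (\<Theta> g) U \<in> carrier A"
    using U_coset by blast
next
  fix g h assume "g \<in> carrier K" "h \<in> carrier K"
  then show "fst (\<Theta> (g \<otimes>\<^bsub>K\<^esub> h)) U = fst (\<Theta> g) U \<otimes>\<^bsub>A\<^esub> fst (\<Theta> h) U"
    using hom_mult[OF \<Theta>] wreath_product_base_mult[OF assms(1) U snd_\<Theta>] by simp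
qed

lemma card_wreath_product_integer_mod_group_square:
  fixes Q (structure)
  assumes "group Q" and "subgroup U Q" and "card (carrier Q) = p ^ k" and "prime p"
  shows "card (carrier (wreath_product (integer_mod_group (p * p)) Q U)) = p ^ (2 * card (rcosets U) + k)"
proof -
  have "finite (carrier Q)"
    using assms(3,4) prime_gt_0_nat by (metis card_ge_0_finite zero_less_power)
  then have "card (carrier (wreath_product (integer_mod_group (p * p)) Q U)) =
      (p * p) ^ card (rcosets U) * p ^ k"
    using card_wreath_product[OF assms(1,2), where A = "integer_mod_group (p * p)"] assms(3)
      prime_gt_0_nat[OF assms(4)]
    by (simp add: carrier_integer_mod_group flip: of_nat_mult)
  also have "\<dots> = p ^ (2 * card (rcosets U) + k)"
    by (simp add: power_add power_mult power2_eq_square)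
  finally show ?thesis .
qed

definition wreath_map ::
    "('q, 'z) monoid_scheme \<Rightarrow> 'q set \<Rightarrow> ('b \<Rightarrow> 'd) \<Rightarrow> ('q set \<Rightarrow> 'b) \<times> 'q \<Rightarrow> ('q set \<Rightarrow> 'd) \<times> 'q"
  where "wreath_map Q U f x = (\<lambda>c \<in> rcosets\<^bsub>Q\<^esub> U. f (fst x c), snd x)"

lemma wreath_map_hom:
  fixes Q (structure)
  assumes "group Q" and U: "subgroup U Q" and f: "f \<in> hom A B"
  shows "wreath_map Q U f \<in> hom (wreath_product A Q U) (wreath_product B Q U)"
proof (rule homI)
  fix x assume "x \<in> carrier (wreath_product A Q U)"
  then show "wreath_map Q U f x \<in> carrier (wreath_product B Q U)"
    using hom_in_carrier[OF f] by (auto simp: wreath_product_simps wreath_map_def PiE_iff)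
next
  fix x y assume x: "x \<in> carrier (wreath_product A Q U)" and y: "y \<in> carrier (wreath_product A Q U)"
  then have "f (fst x c \<otimes>\<^bsub>A\<^esub> fst y (c #> snd x)) = f (fst x c) \<otimes>\<^bsub>B\<^esub> f (fst y (c #> snd x))"
    if "c \<in> rcosets U" for c
    using that group.rcosets_r_coset_closed[OF assms(1) U] hom_mult[OF f]
    by (auto simp: wreath_product_simps PiE_iff)
  then show "wreath_map Q U f (x \<otimes>\<^bsub>wreath_product A Q U\<^esub> y) =
      wreath_map Q U f x \<otimes>\<^bsub>wreath_product B Q U\<^esub> wreath_map Q U f y"
    using x group.rcosets_r_coset_closed[OF assms(1) U]
    by (auto simp: wreath_product_simps wreath_map_def intro!: restrict_ext)
qed

lemma wreath_map_surj:
  assumes "f ` carrier A = carrier B"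
  shows "wreath_map Q U f ` carrier (wreath_product A Q U) = carrier (wreath_product B Q U)"
proof
  show "wreath_map Q U f ` carrier (wreath_product A Q U) \<subseteq> carrier (wreath_product B Q U)"
    using assms by (auto simp: wreath_product_simps wreath_map_def PiE_iff)
next
  show "carrier (wreath_product B Q U) \<subseteq> wreath_map Q U f ` carrier (wreath_product A Q U)"
  proof
    fix y assume y: "y \<in> carrier (wreath_product B Q U)"
    let ?x = "(\<lambda>c \<in> rcosets\<^bsub>Q\<^esub> U. inv_into (carrier A) f (fst y c), snd y)"
    have "?x \<in> carrier (wreath_product A Q U)"
      using y assms by (auto simp: wreath_product_simps PiE_iff inv_into_into)
    moreover have "wreath_map Q U f ?x = y"
      using y assms by (auto simp: wreath_product_simps wreath_map_def PiE_iff f_inv_into_f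
          extensional_def prod_eq_iff)
    ultimately show "y \<in> wreath_map Q U f ` carrier (wreath_product A Q U)"
      by (metis image_eqI)
  qed
qed

(* Choosing the representative 1 for U makes the U-coordinate of the induced homomorphism
   restrict to gamma on U (induced_hom_base). *)
definition coset_rep :: "('q, 'z) monoid_scheme \<Rightarrow> 'q set \<Rightarrow> 'q set \<Rightarrow> 'q"
  where "coset_rep Q U c = (if c = U then \<one>\<^bsub>Q\<^esub> else (SOME a. a \<in> c))"

lemma coset_rep:
  fixes Q (structure)
  assumes "group Q" and U: "subgroup U Q" and c: "c \<in> rcosets U"
  shows "coset_rep Q U c \<in> carrier Q" and "U #> coset_rep Q U c = c"
proof -
  interpret group Q by (rule assms(1))
  obtain a where a: "a \<in> carrier Q" "c = U #> a"
    using c unfolding RCOSETS_def by blast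
  have "coset_rep Q U c \<in> c"
  proof (cases "c = U")
    case True
    then show ?thesis
      using U subgroup.one_closed by (simp add: coset_rep_def)
  next
    case False
    have "a \<in> c"
      using a rcos_self U by blast
    then show ?thesis
      unfolding coset_rep_def using False by (metis someI_ex)
  qed
  then show "coset_rep Q U c \<in> carrier Q" and "U #> coset_rep Q U c = c"
    using a repr_independence[OF _ a(1) U] r_coset_subset_G[OF subgroup.subset[OF U] a(1)] by auto
qed

lemma coset_rep_cocycle_mem:
  fixes Q (structure)
  assumes "group Q" and U: "subgroup U Q" and c: "c \<in> rcosets U" and q: "q \<in> carrier Q"
  shows "coset_rep Q U c \<otimes> q \<otimes> inv (coset_rep Q U (c #> q)) \<in> U"
proof -
  interpret group Q by (rule assms(1))
  have cq: "c #> q \<in> rcosets U"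
    using rcosets_r_coset_closed[OF U c q] .
  note r1 = coset_rep[OF assms(1) U c] and r2 = coset_rep[OF assms(1) U cq]
  have "U #> (coset_rep Q U c \<otimes> q) = U #> coset_rep Q U (c #> q)"
    using r1 r2 q subgroup.subset[OF U] coset_mult_assoc by metis
  then have "coset_rep Q U c \<otimes> q \<in> U #> coset_rep Q U (c #> q)"
    using rcos_self[OF _ U] r1 q by (metis m_closed)
  then show ?thesis
    using subgroup.rcos_module_imp[OF U assms(1) r2(1)] by blast
qed

(* Induction of gamma from U to Q (the monomial representation). *)
definition induced_hom ::
    "('q, 'z) monoid_scheme \<Rightarrow> 'q set \<Rightarrow> ('q \<Rightarrow> 'b) \<Rightarrow> 'q \<Rightarrow> ('q set \<Rightarrow> 'b) \<times> 'q"
  where "induced_hom Q U \<gamma> q =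
    (\<lambda>c \<in> rcosets\<^bsub>Q\<^esub> U. \<gamma> (coset_rep Q U c \<otimes>\<^bsub>Q\<^esub> q \<otimes>\<^bsub>Q\<^esub> inv\<^bsub>Q\<^esub> coset_rep Q U (c #>\<^bsub>Q\<^esub> q)), q)"

lemma induced_hom_hom:
  fixes Q (structure)
  assumes "group Q" and U: "subgroup U Q" and \<gamma>: "\<gamma> \<in> hom (Q\<lparr>carrier := U\<rparr>) A"
  shows "induced_hom Q U \<gamma> \<in> hom Q (wreath_product A Q U)"
proof (rule homI)
  interpret group Q by (rule assms(1))
  fix q assume q: "q \<in> carrier Q"
  then show "induced_hom Q U \<gamma> q \<in> carrier (wreath_product A Q U)"
    using hom_in_carrier[OF \<gamma>] coset_rep_cocycle_mem[OF assms(1) U _ q]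
    by (auto simp: induced_hom_def wreath_product_simps PiE_iff)
next
  interpret group Q by (rule assms(1))
  fix q r assume q: "q \<in> carrier Q" and r: "r \<in> carrier Q"
  let ?t = "coset_rep Q U"
  have "\<gamma> (?t c \<otimes> (q \<otimes> r) \<otimes> inv ?t (c #> (q \<otimes> r))) =
      \<gamma> (?t c \<otimes> q \<otimes> inv ?t (c #> q)) \<otimes>\<^bsub>A\<^esub> \<gamma> (?t (c #> q) \<otimes> r \<otimes> inv ?t (c #> q #> r))"
    if c: "c \<in> rcosets U" for c
  proof -
    have cq: "c #> q \<in> rcosets U"
      using rcosets_r_coset_closed[OF U c q] .
    have cqr: "c #> q #> r = c #> (q \<otimes> r)"
      using coset_mult_assoc[OF subgroup.rcosets_carrier[OF U assms(1) c] q r] .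
    have "?t c \<otimes> (q \<otimes> r) \<otimes> inv ?t (c #> (q \<otimes> r)) =
        (?t c \<otimes> q \<otimes> inv ?t (c #> q)) \<otimes> (?t (c #> q) \<otimes> r \<otimes> inv ?t (c #> q #> r))"
      using coset_rep(1)[OF assms(1) U c] coset_rep(1)[OF assms(1) U cq] q r cqr
        coset_rep(1)[OF assms(1) U rcosets_r_coset_closed[OF U c m_closed[OF q r]]]
      by (simp add: m_assoc inv_solve_left)
    then show ?thesis
      using hom_mult[OF \<gamma>] coset_rep_cocycle_mem[OF assms(1) U c q] coset_rep_cocycle_mem[OF assms(1) U cq r]
      by simp
  qed
  then show "induced_hom Q U \<gamma> (q \<otimes> r) = induced_hom Q U \<gamma> q \<otimes>\<^bsub>wreath_product A Q U\<^esub> induced_hom Q U \<gamma> r"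
    using q rcosets_r_coset_closed[OF U _ q]
    by (auto simp: induced_hom_def wreath_product_simps intro!: restrict_ext)
qed

lemma induced_hom_base:
  fixes Q (structure)
  assumes "group Q" and U: "subgroup U Q" and u: "u \<in> U"
  shows "fst (induced_hom Q U \<gamma> u) U = \<gamma> u"
proof -
  interpret group Q by (rule assms(1))
  have "U #> u = U"
    using coset_join2[OF subgroup.mem_carrier[OF U u] U u] .
  then show ?thesis
    using subgroup.subgroup_in_rcosets[OF U assms(1)] subgroup.mem_carrier[OF U u]
    by (simp add: induced_hom_def coset_rep_def)
qed

section \<open>Locally constant maps\<close>

(* Continuity into a discrete space, the form in which continuity occurs in free_pro_p_on. *)
definition locally_constant :: "'a topology \<Rightarrow> ('a \<Rightarrow> 'b) \<Rightarrow> bool"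
  where "locally_constant T f \<longleftrightarrow> (\<forall>y. openin T {x \<in> topspace T. f x = y})"

lemma openin_locally_constant_preimage:
  assumes "locally_constant T f"
  shows "openin T {x \<in> topspace T. P (f x)}"
proof -
  have "{x \<in> topspace T. P (f x)} = (\<Union>y \<in> {y. P y}. {x \<in> topspace T. f x = y})"
    by auto
  then show ?thesis
    using assms unfolding locally_constant_def by auto
qed

lemma closedin_locally_constant_preimage:
  assumes "locally_constant T f"
  shows "closedin T {x \<in> topspace T. P (f x)}"
proof -
  have "topspace T - {x \<in> topspace T. P (f x)} = {x \<in> topspace T. \<not> P (f x)}"
    by auto
  then show ?thesis
    using openin_locally_constant_preimage[OF assms] unfolding closedin_def by auto
qed

lemma locally_constant_compose:
  "locally_constant T f \<Longrightarrow> locally_constant T (\<lambda>x. g (f x))"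
  using openin_locally_constant_preimage[of T f "\<lambda>z. g z = _"]
  by (simp add: locally_constant_def)

lemma closedin_locally_constant_eq:
  assumes "locally_constant T f" and "locally_constant T g"
  shows "closedin T {x \<in> topspace T. f x = g x}"
proof -
  have "locally_constant T (\<lambda>x. (f x, g x))"
    unfolding locally_constant_def
  proof
    fix y :: "_ \<times> _"
    have "{x \<in> topspace T. (f x, g x) = y} =
        {x \<in> topspace T. f x = fst y} \<inter> {x \<in> topspace T. g x = snd y}"
      by auto
    then show "openin T {x \<in> topspace T. (f x, g x) = y}"
      using assms unfolding locally_constant_def by auto
  qed
  from closedin_locally_constant_preimage[OF this, of "\<lambda>(a, b). a = b"] show ?thesis
    by simp
qed

lemma openin_r_coset:
  fixes G (structure)
  assumes tg: "topological_group G T" and N: "openin T N" "N \<subseteq> carrier G" and g: "g \<in> carrier G"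
  shows "openin T (N #> g)"
proof -
  interpret group G
    using tg unfolding topological_group_def by blast
  have top: "topspace T = carrier G"
    and mult: "continuous_map (prod_topology T T) T (\<lambda>(x, y). x \<otimes> y)"
    using tg unfolding topological_group_def by auto
  have "continuous_map T (prod_topology T T) (\<lambda>x. (x, inv g))"
    using g top by (intro continuous_map_pairedI) auto
  from continuous_map_compose[OF this mult] have "continuous_map T T (\<lambda>x. x \<otimes> inv g)"
    by (simp add: o_def)
  moreover have "N #> g = {x \<in> topspace T. x \<otimes> inv g \<in> N}"
  proof (intro equalityI subsetI)
    fix x assume "x \<in> N #> g"
    then obtain n where "n \<in> N" "x = n \<otimes> g"
      unfolding r_coset_def by blast
    then show "x \<in> {x \<in> topspace T. x \<otimes> inv g \<in> N}"
      using N(2) g top by (auto simp: m_assoc)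
  next
    fix x assume x: "x \<in> {x \<in> topspace T. x \<otimes> inv g \<in> N}"
    then have "x = x \<otimes> inv g \<otimes> g"
      using g top by (simp add: m_assoc)
    then show "x \<in> N #> g"
      using x unfolding r_coset_def by blast
  qed
  ultimately show ?thesis
    using openin_continuous_map_preimage[OF _ N(1)] by auto
qed

lemma locally_constant_r_coset:
  fixes G (structure)
  assumes tg: "topological_group G T" and N: "openin T N" "subgroup N G"
  shows "locally_constant T (\<lambda>g. N #> g)"
  unfolding locally_constant_def
proof
  fix c
  interpret group G
    using tg unfolding topological_group_def by blast
  have top: "topspace T = carrier G"
    using tg unfolding topological_group_def by auto
  show "openin T {x \<in> topspace T. N #> x = c}"
  proof (cases "\<exists>x0 \<in> carrier G. N #> x0 = c")
    case True
    then obtain x0 where x0: "x0 \<in> carrier G" "N #> x0 = c"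
      by blast
    have "{x \<in> topspace T. N #> x = c} = N #> x0"
    proof (intro equalityI subsetI)
      fix x assume "x \<in> {x \<in> topspace T. N #> x = c}"
      then show "x \<in> N #> x0"
        using x0 top rcos_self[OF _ N(2)] by auto
    next
      fix x assume x: "x \<in> N #> x0"
      then have "x \<in> carrier G"
        using r_coset_subset_G[OF subgroup.subset[OF N(2)] x0(1)] by blast
      then show "x \<in> {x \<in> topspace T. N #> x = c}"
        using repr_independence[OF x x0(1) N(2)] x0(2) top by simp
    qed
    then show ?thesis
      using openin_r_coset[OF tg N(1) subgroup.subset[OF N(2)] x0(1)] by simp
  next
    case False
    then have "{x \<in> topspace T. N #> x = c} = {}"
      using top by auto
    then show ?thesis
      by (simp only: openin_empty)
  qed
qed

section \<open>Profinite and free pro-p groups\<close>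

lemma hom_equalizer_subgroup:
  assumes "group G" and "group H" and f: "f \<in> hom G H" and g: "g \<in> hom G H"
  shows "subgroup {x \<in> carrier G. f x = g x} G"
proof -
  interpret f: group_hom G H f
    using assms by (simp add: group_hom_def group_hom_axioms_def)
  interpret g: group_hom G H g
    using assms by (simp add: group_hom_def group_hom_axioms_def)
  show ?thesis
    by (rule f.G.subgroupI) auto
qed

lemma finite_group_iso_nat_monoid:
  assumes "group E" and "finite (carrier E)"
  shows "\<exists>(K :: nat monoid) h. group K \<and> card (carrier K) = card (carrier E) \<and> h \<in> iso E K"
proof -
  interpret group E by fact
  obtain g where "bij_betw g (carrier E) {0..<card (carrier E)}"
    using ex_bij_betw_finite_nat[OF assms(2)] by blast
  then have inj: "inj_on g (carrier E)"
    using bij_betw_def by blast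
  define K where "K = \<lparr>carrier = g ` carrier E,
      mult = (\<lambda>a b. g (inv_into (carrier E) g a \<otimes>\<^bsub>E\<^esub> inv_into (carrier E) g b)), one = g \<one>\<^bsub>E\<^esub>\<rparr>"
  have iso: "g \<in> iso E K"
    unfolding iso_def K_def using inj by (auto intro!: homI simp: inj_on_imp_bij_betw)
  have "group (K\<lparr>one := g \<one>\<^bsub>E\<^esub>\<rparr>)"
    using iso_imp_img_group[OF iso] .
  moreover have "K\<lparr>one := g \<one>\<^bsub>E\<^esub>\<rparr> = K"
    unfolding K_def by simp
  moreover have "card (carrier K) = card (carrier E)"
    unfolding K_def using card_image[OF inj] by simp
  ultimately show ?thesis
    using iso by auto
qed

lemma pro_p_group_card_quotient:
  assumes "pro_p_group p G T" and "N \<lhd> G" and "openin T N"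
  shows "\<exists>k. card (carrier (G Mod N)) = p ^ k"
  using assms unfolding pro_p_group_def FactGroup_def by auto

lemma profinite_group_open_normal_subgroup_below:
  assumes "profinite_group G T" and "subgroup M G" and "openin (subtopology T H) M"
  shows "\<exists>N. N \<lhd> G \<and> openin T N \<and> H \<inter> N \<subseteq> M"
proof -
  obtain W where W: "openin T W" "M = W \<inter> H"
    using assms(3) unfolding openin_subtopology by blast
  then have "\<one>\<^bsub>G\<^esub> \<in> W"
    using subgroup.one_closed[OF assms(2)] by blast
  then obtain N where "N \<lhd> G" "openin T N" "N \<subseteq> W"
    using assms(1) W(1) unfolding profinite_group_def by blast
  then show ?thesis
    using W(2) by blast
qed

lemma free_pro_p_on_topological_group:
  "free_pro_p_on p G T S \<iota> \<Longrightarrow> topological_group G T"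
  unfolding free_pro_p_on_def pro_p_group_def profinite_group_def by blast

(* The universal property in free_pro_p_on only quantifies over finite p-groups on nat;
   transport along an isomorphism extends it to finite p-groups of any type. *)
lemma free_pro_p_on_extend:
  assumes free: "free_pro_p_on p G T S \<iota>" and p: "prime p"
    and E: "group E" "card (carrier E) = p ^ k"
    and f: "f ` S \<subseteq> carrier E" "finite {x \<in> S. f x \<noteq> \<one>\<^bsub>E\<^esub>}"
  shows "\<exists>\<phi> \<in> hom G E. locally_constant T \<phi> \<and> (\<forall>x \<in> S. \<phi> (\<iota> x) = f x)"
proof -
  have top: "topspace T = carrier G"
    using free_pro_p_on_topological_group[OF free] unfolding topological_group_def by blast
  have univ: "\<And>(K :: nat monoid) f'. finite_p_group p K \<Longrightarrow> f' ` S \<subseteq> carrier K \<Longrightarrow>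
      finite {x \<in> S. f' x \<noteq> \<one>\<^bsub>K\<^esub>} \<Longrightarrow>
      \<exists>\<phi> \<in> hom G K. (\<forall>y. openin T {g \<in> carrier G. \<phi> g = y}) \<and> (\<forall>x \<in> S. \<phi> (\<iota> x) = f' x)"
    using free unfolding free_pro_p_on_def by blast
  have "card (carrier E) > 0"
    using E(2) prime_gt_0_nat[OF p] by simp
  then have finE: "finite (carrier E)"
    by (rule card_ge_0_finite)
  obtain K :: "nat monoid" and h where K: "group K" "card (carrier K) = card (carrier E)" "h \<in> iso E K"
    using finite_group_iso_nat_monoid[OF E(1) finE] by blast
  have "finite_p_group p K"
    unfolding finite_p_group_def using K E(2) finE by (metis card_ge_0_finite \<open>card (carrier E) > 0\<close>)
  interpret h: group_hom E K h
    using E(1) K(1,3) by (simp add: group_hom_def group_hom_axioms_def iso_def)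
  have "(\<lambda>x. h (f x)) ` S \<subseteq> carrier K"
    using f(1) by auto
  moreover have "finite {x \<in> S. h (f x) \<noteq> \<one>\<^bsub>K\<^esub>}"
    using f(2) by (rule rev_finite_subset) auto
  ultimately obtain \<phi> where \<phi>: "\<phi> \<in> hom G K" "\<forall>y. openin T {g \<in> carrier G. \<phi> g = y}"
    "\<forall>x \<in> S. \<phi> (\<iota> x) = h (f x)"
    using univ[OF \<open>finite_p_group p K\<close>] by blast
  let ?h' = "inv_into (carrier E) h"
  have "?h' \<in> hom K E"
    using group.iso_set_sym[OF E(1) K(3)] unfolding iso_def by blast
  then have "?h' \<circ> \<phi> \<in> hom G E"
    using Group.hom_compose[OF \<phi>(1)] by blast
  moreover have "locally_constant T (?h' \<circ> \<phi>)"
    using locally_constant_compose[of T \<phi> ?h'] \<phi>(2) top by (simp add: locally_constant_def o_def)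
  moreover have "\<forall>x \<in> S. (?h' \<circ> \<phi>) (\<iota> x) = f x"
    using \<phi>(3) f(1) K(3) by (auto simp: iso_def bij_betw_def)
  ultimately show ?thesis
    by blast
qed

lemma free_pro_p_on_hom_eqI:
  assumes free: "free_pro_p_on p G T S \<iota>" and B: "group B"
    and \<phi>: "\<phi> \<in> hom G B" "locally_constant T \<phi>" and \<psi>: "\<psi> \<in> hom G B" "locally_constant T \<psi>"
    and eq: "\<And>x. x \<in> S \<Longrightarrow> \<phi> (\<iota> x) = \<psi> (\<iota> x)" and g: "g \<in> carrier G"
  shows "\<phi> g = \<psi> g"
proof -
  have tg: "topological_group G T"
    using free_pro_p_on_topological_group[OF free] .
  then have G: "group G" and top: "topspace T = carrier G"
    unfolding topological_group_def by blast+
  have gen: "\<iota> ` S \<subseteq> carrier G" and dense: "T closure_of (generate G (\<iota> ` S)) = carrier G"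
    using free unfolding free_pro_p_on_def by blast+
  let ?Eq = "{x \<in> carrier G. \<phi> x = \<psi> x}"
  have "generate G (\<iota> ` S) \<subseteq> ?Eq"
    using group.generate_subgroup_incl[OF G _ hom_equalizer_subgroup[OF G B \<phi>(1) \<psi>(1)]] gen eq
    by blast
  moreover have "closedin T ?Eq"
    using closedin_locally_constant_eq[OF \<phi>(2) \<psi>(2)] top by simp
  ultimately have "T closure_of (generate G (\<iota> ` S)) \<subseteq> ?Eq"
    by (rule closure_of_minimal)
  then show ?thesis
    using g dense by blast
qed

lemma free_pro_p_on_lift:
  assumes free: "free_pro_p_on p G T S \<iota>" and p: "prime p"
    and E: "group E" "card (carrier E) = p ^ k" and B: "group B"
    and red: "red \<in> hom E B" "red ` carrier E = carrier B"
    and \<theta>: "\<theta> \<in> hom G B" "locally_constant T \<theta>"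
  shows "\<exists>\<Theta> \<in> hom G E. locally_constant T \<Theta> \<and> (\<forall>g \<in> carrier G. red (\<Theta> g) = \<theta> g)"
proof -
  have top: "topspace T = carrier G"
    using free_pro_p_on_topological_group[OF free] unfolding topological_group_def by blast
  have gen: "\<iota> ` S \<subseteq> carrier G"
    and conv: "\<And>W. openin T W \<Longrightarrow> \<one>\<^bsub>G\<^esub> \<in> W \<Longrightarrow> finite {x \<in> S. \<iota> x \<notin> W}"
    using free unfolding free_pro_p_on_def by blast+
  interpret red: group_hom E B red
    using E(1) B red(1) by (simp add: group_hom_def group_hom_axioms_def)
  interpret \<theta>: group_hom G B \<theta>
    using free_pro_p_on_topological_group[OF free] B \<theta>(1)
    by (simp add: group_hom_def group_hom_axioms_def topological_group_def)
  \<comment> \<open>Lifting \<open>\<one>\<close> to \<open>\<one>\<close> keeps the prescribed values on \<open>S\<close> almost all trivial.\<close>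
  define lift where "lift y = (if y = \<one>\<^bsub>B\<^esub> then \<one>\<^bsub>E\<^esub> else inv_into (carrier E) red y)" for y
  have lift: "lift y \<in> carrier E \<and> red (lift y) = y" if "y \<in> carrier B" for y
    using that red(2) by (auto simp: lift_def inv_into_into f_inv_into_f)
  define f where "f x = lift (\<theta> (\<iota> x))" for x
  have "f ` S \<subseteq> carrier E"
    using gen lift unfolding f_def by auto
  moreover have "finite {x \<in> S. f x \<noteq> \<one>\<^bsub>E\<^esub>}"
  proof (rule rev_finite_subset)
    let ?W = "{g \<in> topspace T. \<theta> g = \<one>\<^bsub>B\<^esub>}"
    have "openin T ?W"
      using \<theta>(2) unfolding locally_constant_def by blast
    moreover have "\<one>\<^bsub>G\<^esub> \<in> ?W"
      using top by simp
    ultimately show "finite {x \<in> S. \<iota> x \<notin> ?W}"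
      by (rule conv)
    show "{x \<in> S. f x \<noteq> \<one>\<^bsub>E\<^esub>} \<subseteq> {x \<in> S. \<iota> x \<notin> ?W}"
      using gen top by (auto simp: f_def lift_def)
  qed
  ultimately obtain \<Theta> where \<Theta>: "\<Theta> \<in> hom G E" "locally_constant T \<Theta>" "\<forall>x \<in> S. \<Theta> (\<iota> x) = f x"
    using free_pro_p_on_extend[OF free p E] by blast
  have red_\<Theta>: "red \<circ> \<Theta> \<in> hom G B" "locally_constant T (red \<circ> \<Theta>)"
    using Group.hom_compose[OF \<Theta>(1) red(1)] locally_constant_compose[OF \<Theta>(2)]
    by (simp_all add: o_def)
  have "(red \<circ> \<Theta>) (\<iota> x) = \<theta> (\<iota> x)" if "x \<in> S" for x
    using that \<Theta>(3) gen lift unfolding f_def by auto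
  then have "(red \<circ> \<Theta>) g = \<theta> g" if "g \<in> carrier G" for g
    using free_pro_p_on_hom_eqI[OF free B red_\<Theta> \<theta> _ that] by blast
  then show ?thesis
    using \<Theta>(1,2) by (intro bexI[of _ \<Theta>]) auto
qed

lemma free_pro_p_on_lift_induced_hom:
  fixes G (structure)
  assumes free: "free_pro_p_on p G T S \<iota>" and p: "prime p"
    and H: "subgroup H G" and N: "N \<lhd> G" "openin T N"
    and \<gamma>: "\<gamma> \<in> hom ((G Mod N)\<lparr>carrier := (\<lambda>g. N #> g) ` H\<rparr>) (integer_mod_group p)"
  obtains \<Theta> where "\<Theta> \<in> hom G (wreath_product (integer_mod_group (p * p)) (G Mod N) ((\<lambda>g. N #> g) ` H))"
    and "locally_constant T \<Theta>"
    and "\<And>g. g \<in> carrier G \<Longrightarrow> snd (\<Theta> g) = N #> g"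
    and "\<And>h. h \<in> H \<Longrightarrow> fst (\<Theta> h) ((\<lambda>g. N #> g) ` H) mod int p = \<gamma> (N #> h)"
proof -
  have tg: "topological_group G T"
    using free_pro_p_on_topological_group[OF free] .
  interpret group G
    using tg unfolding topological_group_def by blast
  interpret N: normal N G
    by (rule N(1))
  let ?Q = "G Mod N"
  let ?U = "(\<lambda>g. N #> g) ` H"
  interpret Q: group ?Q
    by (rule N.factorgroup_is_group)
  interpret \<pi>: group_hom G ?Q "\<lambda>g. N #> g"
    using N.r_coset_hom_Mod by (simp add: group_hom_def group_hom_axioms_def is_group Q.is_group)
  have U: "subgroup ?U ?Q"
    using \<pi>.subgroup_img_is_subgroup[OF H] .
  have "pro_p_group p G T"
    using free unfolding free_pro_p_on_def by blast
  then obtain k where k: "card (carrier ?Q) = p ^ k"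
    using pro_p_group_card_quotient[OF _ N] by blast
  let ?W = "wreath_product (integer_mod_group p) ?Q ?U"
  let ?E = "wreath_product (integer_mod_group (p * p)) ?Q ?U"
  let ?red = "wreath_map ?Q ?U (\<lambda>k. k mod int p)"
  let ?\<theta> = "\<lambda>g. induced_hom ?Q ?U \<gamma> (N #> g)"
  have W: "group ?W" and E: "group ?E"
    using group_wreath_product[OF group_integer_mod_group Q.is_group U] by blast+
  have card_E: "card (carrier ?E) = p ^ (2 * card (rcosets\<^bsub>?Q\<^esub> ?U) + k)"
    using card_wreath_product_integer_mod_group_square[OF Q.is_group U k p] .
  have red: "?red \<in> hom ?E ?W" "?red ` carrier ?E = carrier ?W"
    using wreath_map_hom[OF Q.is_group U integer_mod_group_reduction_hom[of p "p * p"]]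
      wreath_map_surj[OF integer_mod_group_reduction_surj[of p "p * p"]] prime_gt_0_nat[OF p]
    by simp_all
  have \<theta>: "?\<theta> \<in> hom G ?W" "locally_constant T ?\<theta>"
    using Group.hom_compose[OF \<pi>.homh induced_hom_hom[OF Q.is_group U \<gamma>]]
      locally_constant_compose[OF locally_constant_r_coset[OF tg N(2) N.subgroup_axioms]]
    by (simp_all add: o_def)
  obtain \<Theta> where \<Theta>: "\<Theta> \<in> hom G ?E" "locally_constant T \<Theta>"
    "\<And>g. g \<in> carrier G \<Longrightarrow> ?red (\<Theta> g) = ?\<theta> g"
    using free_pro_p_on_lift[OF free p E card_E W red \<theta>] by blast
  show ?thesis
  proof (rule that[OF \<Theta>(1,2)])
    show "snd (\<Theta> g) = N #> g" if "g \<in> carrier G" for g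
      using \<Theta>(3)[OF that] by (simp add: wreath_map_def induced_hom_def prod_eq_iff)
    show "fst (\<Theta> h) ?U mod int p = \<gamma> (N #> h)" if h: "h \<in> H" for h
    proof -
      have "fst (\<Theta> h) ?U mod int p = fst (?red (\<Theta> h)) ?U"
        using subgroup.subgroup_in_rcosets[OF U Q.is_group] by (simp add: wreath_map_def)
      also have "\<dots> = fst (?\<theta> h) ?U"
        using \<Theta>(3) subgroup.mem_carrier[OF H h] by simp
      also have "\<dots> = \<gamma> (N #> h)"
        using induced_hom_base[OF Q.is_group U] h by blast
      finally show ?thesis .
    qed
  qed
qed

lemma free_pro_p_on_character_lift:
  fixes G (structure)
  assumes free: "free_pro_p_on p G T S \<iota>" and p: "prime p"
    and H: "subgroup H G" and N: "N \<lhd> G" "openin T N"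
    and \<gamma>: "\<gamma> \<in> hom ((G Mod N)\<lparr>carrier := (\<lambda>g. N #> g) ` H\<rparr>) (integer_mod_group p)"
  shows "\<exists>\<psi> \<in> hom (G\<lparr>carrier := H\<rparr>) (integer_mod_group (p * p)).
           locally_constant T \<psi> \<and> (\<forall>h \<in> H. \<psi> h mod int p = \<gamma> (N #> h))"
proof -
  interpret group G
    using free_pro_p_on_topological_group[OF free] unfolding topological_group_def by blast
  interpret N: normal N G
    by (rule N(1))
  let ?U = "(\<lambda>g. N #> g) ` H"
  have Q: "group (G Mod N)"
    by (rule N.factorgroup_is_group)
  interpret \<pi>: group_hom G "G Mod N" "\<lambda>g. N #> g"
    using N.r_coset_hom_Mod Q by (simp add: group_hom_def group_hom_axioms_def is_group)
  have U: "subgroup ?U (G Mod N)"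
    using \<pi>.subgroup_img_is_subgroup[OF H] .
  obtain \<Theta> where \<Theta>: "\<Theta> \<in> hom G (wreath_product (integer_mod_group (p * p)) (G Mod N) ?U)"
    "locally_constant T \<Theta>" "\<And>g. g \<in> carrier G \<Longrightarrow> snd (\<Theta> g) = N #> g"
    "\<And>h. h \<in> H \<Longrightarrow> fst (\<Theta> h) ?U mod int p = \<gamma> (N #> h)"
    using free_pro_p_on_lift_induced_hom[OF free p H N \<gamma>] by blast
  have "\<Theta> \<in> hom (G\<lparr>carrier := H\<rparr>) (wreath_product (integer_mod_group (p * p)) (G Mod N) ?U)"
    using group_hom.restrict_subgroup[OF _ H] \<Theta>(1)
      group_wreath_product[OF group_integer_mod_group Q U]
    unfolding group_hom_def group_hom_axioms_def by (blast intro: is_group)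
  then have "(\<lambda>g. fst (\<Theta> g) ?U) \<in> hom (G\<lparr>carrier := H\<rparr>) (integer_mod_group (p * p))"
    by (rule wreath_product_base_coordinate_hom[OF Q U])
      (simp add: \<Theta>(3) subgroup.mem_carrier[OF H])
  moreover have "locally_constant T (\<lambda>g. fst (\<Theta> g) ?U)"
    using locally_constant_compose[OF \<Theta>(2)] .
  ultimately show ?thesis
    using \<Theta>(4) by blast
qed

section \<open>Maximal open subgroups and p-th roots of commutators\<close>

lemma maximal_open_subgroup_imp_maximal_subgroup:
  assumes "group G" and H: "subgroup H G" and M: "maximal_open_subgroup G T H M"
  shows "maximal_subgroup (G\<lparr>carrier := H\<rparr>) M"
proof -
  have sub: "subgroup M G" and MH: "M \<subset> H"
    and maximal: "\<And>L. subgroup L G \<Longrightarrow> M \<subseteq> L \<Longrightarrow> L \<subseteq> H \<Longrightarrow> L = M \<or> L = H"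
    using M unfolding maximal_open_subgroup_def by blast+
  have "subgroup M (G\<lparr>carrier := H\<rparr>)"
    using group.subgroup_incl[OF assms(1) sub H] MH by blast
  moreover have "L = M \<or> L = H" if "subgroup L (G\<lparr>carrier := H\<rparr>)" "M \<subseteq> L" for L
    using maximal[OF group.incl_subgroup[OF assms(1) H that(1)] that(2)] subgroup.subset[OF that(1)]
    by simp
  ultimately show ?thesis
    using MH unfolding maximal_subgroup_def by auto
qed

lemma maximal_open_subgroup_character:
  fixes G (structure)
  assumes pro_p: "pro_p_group p G T" and p: "prime p" and H: "subgroup H G"
    and M: "maximal_open_subgroup G T H M" and x: "x \<in> H" "x \<notin> M"
  shows "\<exists>N \<gamma>. N \<lhd> G \<and> openin T N \<and>
    \<gamma> \<in> hom ((G Mod N)\<lparr>carrier := (\<lambda>g. N #> g) ` H\<rparr>) (integer_mod_group p) \<and> \<gamma> (N #> x) \<noteq> 0"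
proof -
  have prof: "profinite_group G T"
    using pro_p unfolding pro_p_group_def by blast
  interpret group G
    using prof unfolding profinite_group_def topological_group_def by blast
  have subM: "subgroup M G" and "openin (subtopology T H) M"
    using M unfolding maximal_open_subgroup_def by blast+
  then obtain N where N: "N \<lhd> G" "openin T N" "H \<inter> N \<subseteq> M"
    using profinite_group_open_normal_subgroup_below[OF prof] by blast
  interpret N: normal N G
    by (rule N(1))
  let ?Q = "G Mod N"
  let ?H = "G\<lparr>carrier := H\<rparr>"
  let ?U = "(\<lambda>g. N #> g) ` H"
  interpret Q: group ?Q
    by (rule N.factorgroup_is_group)
  interpret \<pi>\<^sub>G: group_hom G ?Q "\<lambda>g. N #> g"
    using N.r_coset_hom_Mod by (simp add: group_hom_def group_hom_axioms_def is_group Q.is_group)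
  interpret \<pi>: group_hom ?H ?Q "\<lambda>g. N #> g"
    by (rule \<pi>\<^sub>G.restrict_subgroup[OF H])
  have ker: "kernel ?H ?Q (\<lambda>g. N #> g) \<subseteq> M"
  proof
    fix h assume "h \<in> kernel ?H ?Q (\<lambda>g. N #> g)"
    then have "h \<in> H" and "h \<in> N"
      using coset_join1[OF _ subgroup.mem_carrier[OF H] N.subgroup_axioms] unfolding kernel_def by auto
    then show "h \<in> M"
      using N(3) by blast
  qed
  have subM': "subgroup M ?H" and maxM: "maximal_subgroup ?H M"
    using maximal_open_subgroup_imp_maximal_subgroup[OF is_group H M]
    unfolding maximal_subgroup_def by blast+
  have max_img: "maximal_subgroup (?Q\<lparr>carrier := ?U\<rparr>) ((\<lambda>g. N #> g) ` M)"
    using \<pi>.maximal_subgroup_image[OF maxM ker] by simp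
  have x_img: "N #> x \<in> ?U" "N #> x \<notin> (\<lambda>g. N #> g) ` M"
    using \<pi>.image_mem_iff_of_kernel_subset[OF subM' ker] x by auto
  have U: "subgroup ?U ?Q"
    using \<pi>.img_is_subgroup by simp
  obtain k where "card (carrier ?Q) = p ^ k"
    using pro_p_group_card_quotient[OF pro_p N(1,2)] by blast
  then obtain j where j: "card (carrier (?Q\<lparr>carrier := ?U\<rparr>)) = p ^ j"
    using Q.subgroup_card_prime_power(1)[OF _ p U] by auto
  have "\<exists>\<gamma> \<in> hom (?Q\<lparr>carrier := ?U\<rparr>) (integer_mod_group p). \<gamma> (N #> x) \<noteq> 0"
    by (rule group.maximal_subgroup_of_p_group_character[OF Q.subgroup_imp_group[OF U] j p max_img])
      (use x_img in simp_all)
  then show ?thesis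
    using N(1,2) by blast
qed

lemma closure_of_derived_subset_kernel:
  assumes "group G" and H: "subgroup H G" and \<psi>: "\<psi> \<in> hom (G\<lparr>carrier := H\<rparr>) A"
    and "comm_group A" and closed: "closedin T {h \<in> H. \<psi> h = \<one>\<^bsub>A\<^esub>}"
  shows "T closure_of derived G H \<subseteq> {h \<in> H. \<psi> h = \<one>\<^bsub>A\<^esub>}"
proof -
  interpret group G by fact
  interpret A: comm_group A by fact
  interpret \<psi>: group_hom "G\<lparr>carrier := H\<rparr>" A \<psi>
    using subgroup_imp_group[OF H] A.is_group \<psi> by (simp add: group_hom_def group_hom_axioms_def)
  have "\<psi> ` derived G H = derived A (\<psi> ` H)"
    using \<psi>.derived_img[of H] derived_consistent[OF _ H] by simp
  also have "\<dots> = {\<one>\<^bsub>A\<^esub>}"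
    using A.derived_eq_singleton[OF hom_carrier[OF \<psi>, simplified]] .
  finally have "derived G H \<subseteq> {h \<in> H. \<psi> h = \<one>\<^bsub>A\<^esub>}"
    using derived_incl[OF _ H] by blast
  then show ?thesis
    using closure_of_minimal[OF _ closed] by blast
qed

lemma closed_commutator_pth_power_character:
  assumes "group G" and "topspace T = carrier G" and H: "closed_subgroup G T H" and "p > 0"
    and \<psi>: "\<psi> \<in> hom (G\<lparr>carrier := H\<rparr>) (integer_mod_group (p * p))" "locally_constant T \<psi>"
    and x: "x \<in> H" "x [^]\<^bsub>G\<^esub> p \<in> closed_commutator G T H"
  shows "\<psi> x mod int p = 0"
proof -
  have subH: "subgroup H G" and clH: "closedin T H"
    using H unfolding closed_subgroup_def by blast+
  interpret \<psi>: group_hom "G\<lparr>carrier := H\<rparr>" "integer_mod_group (p * p)" \<psi>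
    using group.subgroup_imp_group[OF assms(1) subH] \<psi>(1) assms(1)
    by (simp add: group_hom_def group_hom_axioms_def)
  have "{h \<in> H. \<psi> h = 0} = H \<inter> {g \<in> topspace T. \<psi> g = 0}"
    using subgroup.subset[OF subH] assms(2) by blast
  then have "closedin T {h \<in> H. \<psi> h = 0}"
    using closedin_Int[OF clH closedin_locally_constant_preimage[OF \<psi>(2)]] by simp
  then have "closed_commutator G T H \<subseteq> {h \<in> H. \<psi> h = 0}"
    using closure_of_derived_subset_kernel[OF assms(1) subH \<psi>(1)] abelian_integer_mod_group
    unfolding closed_commutator_def by simp
  moreover have "x [^]\<^bsub>G\<^esub> p = x [^]\<^bsub>G\<lparr>carrier := H\<rparr>\<^esub> p"
    by (simp add: nat_pow_def)
  ultimately have "\<psi> (x [^]\<^bsub>G\<lparr>carrier := H\<rparr>\<^esub> p) = 0"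
    using x(2) by auto
  then have "(int p * \<psi> x) mod (int p * int p) = 0"
    using \<psi>.hom_nat_pow x(1) by simp
  then have "int p dvd \<psi> x"
    using \<open>p > 0\<close> by (simp add: mod_eq_0_iff_dvd)
  then show ?thesis
    by simp
qed

lemma free_pro_p_pth_root_in_maximal_open_subgroup:
  assumes free: "free_pro_p_on p G T S \<iota>" and p: "prime p"
    and H: "closed_subgroup G T H" and M: "maximal_open_subgroup G T H M"
    and x: "x \<in> H" "x [^]\<^bsub>G\<^esub> p \<in> closed_commutator G T H"
  shows "x \<in> M"
proof (rule ccontr)
  assume "x \<notin> M"
  have tg: "topological_group G T"
    using free_pro_p_on_topological_group[OF free] .
  have subH: "subgroup H G"
    using H unfolding closed_subgroup_def by blast
  obtain N \<gamma> where N: "N \<lhd> G" "openin T N"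
    and \<gamma>: "\<gamma> \<in> hom ((G Mod N)\<lparr>carrier := (\<lambda>g. N #>\<^bsub>G\<^esub> g) ` H\<rparr>) (integer_mod_group p)"
      "\<gamma> (N #>\<^bsub>G\<^esub> x) \<noteq> 0"
    using maximal_open_subgroup_character[OF _ p subH M x(1) \<open>x \<notin> M\<close>] free
    unfolding free_pro_p_on_def by blast
  obtain \<psi> where \<psi>: "\<psi> \<in> hom (G\<lparr>carrier := H\<rparr>) (integer_mod_group (p * p))" "locally_constant T \<psi>"
    "\<And>h. h \<in> H \<Longrightarrow> \<psi> h mod int p = \<gamma> (N #>\<^bsub>G\<^esub> h)"
    using free_pro_p_on_character_lift[OF free p subH N \<gamma>(1)] by blast
  have "\<psi> x mod int p = 0"
    using closed_commutator_pth_power_character[OF _ _ H prime_gt_0_nat[OF p] \<psi>(1,2) x] tg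
    unfolding topological_group_def by blast
  then show False
    using \<psi>(3)[OF x(1)] \<gamma>(2) by simp
qed

theorem mainTheorem17:
  fixes p :: nat and G :: "('a, 'b) monoid_scheme" and T :: "'a topology"
  assumes "prime p"
    and "free_pro_p_group p G T"
  shows "strongly_commutator_resistant p G T"
proof -
  obtain S :: "'a set" and \<iota> where free: "free_pro_p_on p G T S \<iota>"
    using assms(2) unfolding free_pro_p_group_def by blast
  show ?thesis
    unfolding strongly_commutator_resistant_def hierarchical_def frattini_def
    using free_pro_p_pth_root_in_maximal_open_subgroup[OF free assms(1)] by blast
qed

end
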